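(* Let $p\in[0,1]$, $\delta\in[0,1]$ and fix an integer $n_{\mathrm u}\ge1$. Then $\epsilon_s\to\epsilon_\infty$ almost surely as $s\to\infty$ for some random variable $\epsilon_\infty\in\{0,1\}$, and $$\Pr(\epsilon_\infty=0)=1-p-\Delta R(\delta,p,n_{\mathrm u}),\qquad \Delta R(\delta,p,n_{\mathrm u})=\big(1-(1-\delta)^{n_{\mathrm u}}\big)(1-p).$$
   Context: Define $T^{+}_{\delta}(\epsilon)=\epsilon^2+(1-\epsilon^2)\delta$, $T^{-}_{\delta}(\epsilon)=2\epsilon-\epsilon^2+(1-2\epsilon+\epsilon^2)\delta$, and the fault-free maps $T^{+}(\epsilon)=\epsilon^2$, $T^{-}(\epsilon)=2\epsilon-\epsilon^2$. The partially protected process $(\epsilon_s)_{s\ge0}$ is defined by $\epsilon_0=p$ and, for $s\ge1$, using independent fair coin flips: if $1\le s\le n_{\mathrm u}$, $\epsilon_s=T^{+}_{\delta}(\epsilon_{s-1})$ or $T^{-}_{\delta}(\epsilon_{s-1})$ each with probability $1/2$; if $s>n_{\mathrm u}$, $\epsilon_s=T^{+}(\epsilon_{s-1})$ or $T^{-}(\epsilon_{s-1})$ each with probability $1/2$. (This models an SC decoder in which only the first $n_{\mathrm u}$ levels are faulty with internal erasure probability $\delta$ and all remaining levels are fault-free.) *)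

theory Defs
  imports "HOL-Probability.Probability"
begin

definition Tplus_d :: "real \<Rightarrow> real \<Rightarrow> real" where
  "Tplus_d \<delta> e = e^2 + (1 - e^2) * \<delta>"

definition Tminus_d :: "real \<Rightarrow> real \<Rightarrow> real" where
  "Tminus_d \<delta> e = 2*e - e^2 + (1 - 2*e + e^2) * \<delta>"

definition Tplus :: "real \<Rightarrow> real" where
  "Tplus e = e^2"

definition Tminus :: "real \<Rightarrow> real" where
  "Tminus e = 2*e - e^2"

text \<open>Probability space of independent fair coin flips; the flip used at step s \<ge> 1
  is the (s-1)-th element of the stream (True = take the "+" map).\<close>
definition coin_space :: "bool stream measure" where
  "coin_space = stream_space (measure_pmf (bernoulli_pmf (1/2)))"

fun eps_proc :: "real \<Rightarrow> real \<Rightarrow> nat \<Rightarrow> bool stream \<Rightarrow> nat \<Rightarrow> real" where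
  "eps_proc p \<delta> nu \<omega> 0 = p"
| "eps_proc p \<delta> nu \<omega> (Suc s) =
     (let e = eps_proc p \<delta> nu \<omega> s in
      if Suc s \<le> nu then (if \<omega> !! s then Tplus_d \<delta> e else Tminus_d \<delta> e)
      else (if \<omega> !! s then Tplus e else Tminus e))"

definition DeltaR :: "real \<Rightarrow> real \<Rightarrow> nat \<Rightarrow> real" where
  "DeltaR \<delta> p nu = (1 - (1 - \<delta>)^nu) * (1 - p)"

end

theory Submission
  imports Defs
begin

text \<open>
  The complement \<open>1 - \<epsilon>\<^sub>s\<close> has its expectation multiplied by \<open>1 - \<delta>\<close> at every faulty
  step and preserved at every fault-free one, so \<open>E(1 - \<epsilon>\<^sub>s) = (1 - \<delta>)\<^bsup>min n\<^sub>u s\<^esup>(1 - p)\<close>.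
  The potential \<open>\<surd>(\<epsilon>(1 - \<epsilon>))\<close> shrinks in expectation by the factor \<open>\<surd>3/2\<close> at every
  fault-free step, so its sum over all steps is integrable and hence almost surely finite;
  thus \<open>\<epsilon>\<^sub>s(1 - \<epsilon>\<^sub>s) \<rightarrow> 0\<close>, and since a fault-free step cannot jump across \<open>[1/4, 3/4]\<close>,
  \<open>\<epsilon>\<^sub>s\<close> converges to \<open>0\<close> or to \<open>1\<close>. Dominated convergence then gives
  \<open>P(\<epsilon>\<^sub>\<infinity> = 0) = E(1 - \<epsilon>\<^sub>\<infinity>) = (1 - \<delta>)\<^bsup>n\<^sub>u\<^esup>(1 - p)\<close>.
\<close>

definition polar_step :: "real \<Rightarrow> bool \<Rightarrow> real \<Rightarrow> real" where
  "polar_step d b e = (if b then Tplus_d d e else Tminus_d d e)"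

lemma polar_step_0: "polar_step 0 b e = (if b then Tplus e else Tminus e)"
  by (simp add: polar_step_def Tplus_d_def Tminus_d_def Tplus_def Tminus_def)

lemma one_minus_polar_step:
  "1 - polar_step d b e = (1 - d) * (if b then 1 - e^2 else (1 - e)^2)"
  by (simp add: polar_step_def Tplus_d_def Tminus_d_def power2_eq_square algebra_simps)

lemma polar_step_mean:
  "(1 - polar_step d True e) + (1 - polar_step d False e) = 2 * (1 - d) * (1 - e)"
  unfolding one_minus_polar_step by (simp add: power2_eq_square algebra_simps)

lemma polar_step_range:
  assumes "0 \<le> d" "d \<le> 1" "0 \<le> e" "e \<le> 1"
  shows "0 \<le> polar_step d b e \<and> polar_step d b e \<le> 1"
proof -
  have "0 \<le> 1 - e^2" "1 - e^2 \<le> 1" "(1 - e)^2 \<le> 1"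
    using assms by (auto simp: power_le_one_iff power_le_one)
  then have "0 \<le> (1 - d) * (if b then 1 - e^2 else (1 - e)^2)"
    and "(1 - d) * (if b then 1 - e^2 else (1 - e)^2) \<le> 1"
    using assms by (auto intro: mult_le_one)
  then show ?thesis
    using one_minus_polar_step[of d b e] by linarith
qed

lemma eps_proc_Suc:
  "eps_proc p \<delta> nu \<omega> (Suc s) =
     polar_step (if Suc s \<le> nu then \<delta> else 0) (\<omega> !! s) (eps_proc p \<delta> nu \<omega> s)"
  by (simp add: Let_def polar_step_def Tplus_d_def Tminus_d_def Tplus_def Tminus_def)

declare eps_proc.simps(2) [simp del]

lemma eps_proc_Cons:
  "eps_proc p \<delta> nu (b ## \<omega>) (Suc s) =
     eps_proc (polar_step (if 1 \<le> nu then \<delta> else 0) b p) \<delta> (nu - 1) \<omega> s"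
proof (induction s)
  case (Suc s)
  have "(Suc (Suc s) \<le> nu) = (Suc s \<le> nu - 1)" by arith
  then show ?case
    unfolding eps_proc_Suc[of p \<delta> nu "b ## \<omega>" "Suc s"] Suc.IH by (simp add: eps_proc_Suc)
qed (simp add: eps_proc_Suc)

lemma eps_proc_range:
  assumes "0 \<le> p" "p \<le> 1" "0 \<le> \<delta>" "\<delta> \<le> 1"
  shows "0 \<le> eps_proc p \<delta> nu \<omega> s \<and> eps_proc p \<delta> nu \<omega> s \<le> 1"
  by (induction s) (use assms polar_step_range in \<open>simp_all add: eps_proc_Suc\<close>)

interpretation coin: prob_space coin_space
  unfolding coin_space_def by (rule prob_space.prob_space_stream_space[OF prob_space_measure_pmf])

lemma measurable_snth_coin_space [measurable]:
  "Measurable.pred coin_space (\<lambda>\<omega>. \<omega> !! s)"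
  unfolding coin_space_def
  by (rule measurable_compose[OF measurable_snth]) (simp add: measurable_cong_sets)

lemma borel_measurable_eps_proc [measurable]:
  "(\<lambda>\<omega>. eps_proc p \<delta> nu \<omega> s) \<in> borel_measurable coin_space"
proof (induction s)
  case (Suc s)
  then show ?case
    unfolding eps_proc_Suc polar_step_def Tplus_d_def Tminus_d_def by measurable
qed simp

lemma nn_integral_coin_space_Cons:
  assumes [measurable]: "f \<in> borel_measurable coin_space"
  shows "(\<integral>\<^sup>+\<omega>. f \<omega> \<partial>coin_space) =
           ((\<integral>\<^sup>+\<omega>. f (True ## \<omega>) \<partial>coin_space) + (\<integral>\<^sup>+\<omega>. f (False ## \<omega>) \<partial>coin_space)) / 2"
proof -
  have "(\<integral>\<^sup>+\<omega>. f \<omega> \<partial>coin_space) =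
     (\<integral>\<^sup>+b. (\<integral>\<^sup>+\<omega>. f (b ## \<omega>) \<partial>coin_space) \<partial>measure_pmf (bernoulli_pmf (1/2)))"
    unfolding coin_space_def
    by (rule prob_space.nn_integral_stream_space[OF prob_space_measure_pmf])
       (use assms in \<open>simp add: coin_space_def\<close>)
  then show ?thesis
    by (simp add: ennreal_divide_times divide_ennreal_def distrib_right)
qed

lemma nn_integral_eps_proc_Suc:
  assumes [measurable]: "g \<in> borel_measurable borel"
  shows "(\<integral>\<^sup>+\<omega>. g (eps_proc p \<delta> nu \<omega> (Suc s)) \<partial>coin_space) =
     ((\<integral>\<^sup>+\<omega>. g (eps_proc (polar_step (if 1 \<le> nu then \<delta> else 0) True p) \<delta> (nu - 1) \<omega> s) \<partial>coin_space)
    + (\<integral>\<^sup>+\<omega>. g (eps_proc (polar_step (if 1 \<le> nu then \<delta> else 0) False p) \<delta> (nu - 1) \<omega> s) \<partial>coin_space)) / 2"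
  by (subst nn_integral_coin_space_Cons) (simp_all add: eps_proc_Cons)

lemma borel_measurable_ennreal_one_minus: "(\<lambda>x::real. ennreal (1 - x)) \<in> borel_measurable borel"
  by measurable

lemma ennreal_mean: "0 \<le> a \<Longrightarrow> 0 \<le> b \<Longrightarrow> (ennreal a + ennreal b) / 2 = ennreal ((a + b) / 2)"
  using divide_ennreal[of "a + b" 2] ennreal_plus[of a b] by simp

lemma ennreal_mean_le:
  assumes "A \<le> ennreal a" "B \<le> ennreal b" "0 \<le> a" "0 \<le> b"
  shows "(A + B) / 2 \<le> ennreal ((a + b) / 2)"
  using divide_right_mono_ennreal[OF add_mono[OF assms(1,2)], of 2] ennreal_mean[OF assms(3,4)]
  by simp

lemma nn_integral_one_minus_eps_proc:
  assumes "0 \<le> p" "p \<le> 1" "0 \<le> \<delta>" "\<delta> \<le> 1"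
  shows "(\<integral>\<^sup>+\<omega>. ennreal (1 - eps_proc p \<delta> nu \<omega> s) \<partial>coin_space) = ennreal ((1 - \<delta>)^(min nu s) * (1 - p))"
  using assms(1,2)
proof (induction s arbitrary: p nu)
  case 0
  then show ?case by (simp add: coin.emeasure_space_1)
next
  case (Suc s)
  define d where "d = (if 1 \<le> nu then \<delta> else 0)"
  define c where "c = (1 - \<delta>)^(min (nu - 1) s)"
  have d: "0 \<le> d" "d \<le> 1" and c: "0 \<le> c" using assms unfolding d_def c_def by auto
  have step: "0 \<le> polar_step d b p \<and> polar_step d b p \<le> 1" for b
    using polar_step_range d Suc.prems by blast
  have "(\<integral>\<^sup>+\<omega>. ennreal (1 - eps_proc p \<delta> nu \<omega> (Suc s)) \<partial>coin_space)
      = (ennreal (c * (1 - polar_step d True p)) + ennreal (c * (1 - polar_step d False p))) / 2"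
    unfolding nn_integral_eps_proc_Suc[where g="\<lambda>x. ennreal (1 - x)", OF borel_measurable_ennreal_one_minus]
      d_def[symmetric] c_def
    using step by (simp add: Suc.IH)
  also have "\<dots> = ennreal ((c * (1 - polar_step d True p) + c * (1 - polar_step d False p)) / 2)"
    using c step by (intro ennreal_mean) auto
  also have "\<dots> = ennreal (c * (1 - d) * (1 - p))"
    unfolding distrib_left[symmetric] polar_step_mean
    by (intro arg_cong[where f = ennreal]) (simp add: field_simps)
  also have "c * (1 - d) = (1 - \<delta>)^(min nu (Suc s))"
    unfolding c_def d_def by (cases nu) auto
  finally show ?case .
qed

definition polar_potential :: "real \<Rightarrow> real" where
  "polar_potential x = sqrt (x * (1 - x))"

lemma polar_potential_range: "0 \<le> x \<Longrightarrow> x \<le> 1 \<Longrightarrow> 0 \<le> polar_potential x \<and> polar_potential x \<le> 1"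
  unfolding polar_potential_def by (simp add: mult_le_one)

lemma polar_potential_fault_free_step:
  assumes "0 \<le> x" "x \<le> 1"
  shows "polar_potential (Tplus x) + polar_potential (Tminus x) \<le> sqrt 3 * polar_potential x"
proof -
  define u where "u = x * (1 - x)"
  define a where "a = x * (1 + x)"
  define b where "b = (2 - x) * (1 - x)"
  have "0 \<le> u" unfolding u_def using assms by simp
  moreover have "u = 1/4 - (x - 1/2)^2"
    unfolding u_def by (simp add: power2_eq_square field_simps)
  ultimately have u: "0 \<le> u" "u \<le> 1/4" by simp_all
  have "0 \<le> a" "0 \<le> b" unfolding a_def b_def using assms by auto
  have plus: "Tplus x * (1 - Tplus x) = u * a" and minus: "Tminus x * (1 - Tminus x) = u * b"
    unfolding Tplus_def Tminus_def u_def a_def b_def by (simp_all add: power2_eq_square algebra_simps)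
  \<comment> \<open>\<open>a + b = 2 - 2u\<close> and \<open>ab = u(2 + u) \<le> ((1 + 2u)/2)\<^sup>2\<close>, hence \<open>(\<surd>a + \<surd>b)\<^sup>2 \<le> 3\<close>\<close>
  have "a * b = u * (2 + u)"
    unfolding a_def b_def u_def by (simp add: power2_eq_square algebra_simps)
  also have "\<dots> \<le> ((1 + 2*u)/2)^2"
    using u by (simp add: power2_eq_square field_simps)
  finally have "sqrt (a * b) \<le> sqrt (((1 + 2*u)/2)^2)"
    by (rule real_sqrt_le_mono)
  then have "sqrt a * sqrt b \<le> (1 + 2*u)/2"
    using u by (simp add: real_sqrt_mult)
  moreover have "a + b = 2 - 2*u"
    unfolding a_def b_def u_def by (simp add: algebra_simps)
  moreover have "(sqrt a + sqrt b)^2 = a + b + 2 * (sqrt a * sqrt b)"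
    using \<open>0 \<le> a\<close> \<open>0 \<le> b\<close> by (simp add: power2_eq_square algebra_simps)
  ultimately have "(sqrt a + sqrt b)^2 \<le> 3" by argo
  then have "sqrt a + sqrt b \<le> sqrt 3"
    by (rule real_le_rsqrt)
  have "polar_potential (Tplus x) + polar_potential (Tminus x) = sqrt u * (sqrt a + sqrt b)"
    unfolding polar_potential_def plus minus by (simp add: real_sqrt_mult distrib_left)
  also have "\<dots> \<le> sqrt u * sqrt 3"
    using \<open>sqrt a + sqrt b \<le> sqrt 3\<close> u by (intro mult_left_mono) auto
  also have "\<dots> = sqrt 3 * polar_potential x"
    unfolding polar_potential_def u_def by (rule mult.commute)
  finally show ?thesis .
qed

lemma borel_measurable_ennreal_polar_potential [measurable]:
  "(\<lambda>x. ennreal (polar_potential x)) \<in> borel_measurable borel"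
  unfolding polar_potential_def by measurable

lemma nn_integral_polar_potential_fault_free:
  assumes "0 \<le> p" "p \<le> 1"
  shows "(\<integral>\<^sup>+\<omega>. ennreal (polar_potential (eps_proc p \<delta> 0 \<omega> s)) \<partial>coin_space)
           \<le> ennreal ((sqrt 3 / 2)^s * polar_potential p)"
  using assms
proof (induction s arbitrary: p)
  case 0
  then show ?case by (simp add: coin.emeasure_space_1)
next
  case (Suc s)
  have step: "0 \<le> polar_step 0 b p \<and> polar_step 0 b p \<le> 1" for b
    using polar_step_range Suc.prems by simp
  have pot: "0 \<le> polar_potential (polar_step 0 b p)" for b
    using polar_potential_range step by blast
  have "(\<integral>\<^sup>+\<omega>. ennreal (polar_potential (eps_proc p \<delta> 0 \<omega> (Suc s))) \<partial>coin_space)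
      \<le> ennreal (((sqrt 3 / 2)^s * polar_potential (polar_step 0 True p)
                 + (sqrt 3 / 2)^s * polar_potential (polar_step 0 False p)) / 2)"
    unfolding nn_integral_eps_proc_Suc[OF borel_measurable_ennreal_polar_potential]
    by (rule ennreal_mean_le) (use step pot in \<open>simp_all add: Suc.IH\<close>)
  also have "\<dots> \<le> ennreal ((sqrt 3 / 2)^(Suc s) * polar_potential p)"
    using polar_potential_fault_free_step[OF Suc.prems]
    by (intro ennreal_leI) (auto simp: polar_step_0 distrib_left[symmetric] intro: mult_left_mono)
  finally show ?case .
qed

lemma nn_integral_polar_potential_eps_proc:
  assumes "0 \<le> p" "p \<le> 1" "0 \<le> \<delta>" "\<delta> \<le> 1"
  shows "(\<integral>\<^sup>+\<omega>. ennreal (polar_potential (eps_proc p \<delta> nu \<omega> s)) \<partial>coin_space)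
           \<le> ennreal ((sqrt 3 / 2)^(s - nu))"
  using assms(1,2)
proof (induction nu arbitrary: p s)
  case 0
  have "(\<integral>\<^sup>+\<omega>. ennreal (polar_potential (eps_proc p \<delta> 0 \<omega> s)) \<partial>coin_space)
      \<le> ennreal ((sqrt 3 / 2)^s * polar_potential p)"
    by (rule nn_integral_polar_potential_fault_free[OF 0])
  also have "\<dots> \<le> ennreal ((sqrt 3 / 2)^s)"
    using polar_potential_range[OF 0] by (intro ennreal_leI mult_left_le) auto
  finally show ?case by simp
next
  case (Suc nu)
  show ?case
  proof (cases s)
    case 0
    then show ?thesis
      using polar_potential_range[OF Suc.prems]
      by (simp add: coin.emeasure_space_1)
  next
    case (Suc s')
    have step: "0 \<le> polar_step \<delta> b p \<and> polar_step \<delta> b p \<le> 1" for b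
      using polar_step_range Suc.prems assms by blast
    have "(\<integral>\<^sup>+\<omega>. ennreal (polar_potential (eps_proc p \<delta> (Suc nu) \<omega> s)) \<partial>coin_space)
        \<le> ennreal (((sqrt 3 / 2)^(s' - nu) + (sqrt 3 / 2)^(s' - nu)) / 2)"
      unfolding Suc nn_integral_eps_proc_Suc[OF borel_measurable_ennreal_polar_potential]
      by (rule ennreal_mean_le) (use step in \<open>simp_all add: Suc.IH\<close>)
    then show ?thesis
      using Suc by simp
  qed
qed

lemma AE_summable_if_nn_integral_le_summable:
  fixes f :: "nat \<Rightarrow> 'a \<Rightarrow> real"
  assumes [measurable]: "\<And>s. f s \<in> borel_measurable M"
    and f_nonneg: "\<And>s x. 0 \<le> f s x"
    and bound: "\<And>s. (\<integral>\<^sup>+x. ennreal (f s x) \<partial>M) \<le> ennreal (a s)"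
    and a_nonneg: "\<And>s. 0 \<le> a s" and "summable a"
  shows "AE x in M. summable (\<lambda>s. f s x)"
proof -
  have "(\<integral>\<^sup>+x. (\<Sum>s. ennreal (f s x)) \<partial>M) = (\<Sum>s. \<integral>\<^sup>+x. ennreal (f s x) \<partial>M)"
    by (rule nn_integral_suminf) measurable
  also have "\<dots> \<le> (\<Sum>s. ennreal (a s))"
    using bound by (intro suminf_le summableI)
  also have "\<dots> = ennreal (\<Sum>s. a s)"
    using a_nonneg \<open>summable a\<close> by (rule suminf_ennreal2)
  finally have "(\<integral>\<^sup>+x. (\<Sum>s. ennreal (f s x)) \<partial>M) \<noteq> \<infinity>"
    by (auto simp: top_unique)
  then have "AE x in M. (\<Sum>s. ennreal (f s x)) \<noteq> \<infinity>"
    by (intro nn_integral_PInf_AE) measurable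
  then show ?thesis
    by eventually_elim (use f_nonneg summable_suminf_not_top in auto)
qed

lemma AE_summable_polar_potential_eps_proc:
  assumes "0 \<le> p" "p \<le> 1" "0 \<le> \<delta>" "\<delta> \<le> 1"
  shows "AE \<omega> in coin_space. summable (\<lambda>s. polar_potential (eps_proc p \<delta> nu \<omega> s))"
proof (rule AE_summable_if_nn_integral_le_summable)
  show "summable (\<lambda>s. (sqrt 3 / 2)^(s - nu))"
    using summable_iff_shift[of "\<lambda>s. (sqrt 3 / 2)^(s - nu)" nu]
    by (simp add: summable_geometric real_sqrt_less_iff[of 3 4, simplified])
qed (use assms eps_proc_range polar_potential_range nn_integral_polar_potential_eps_proc in
       \<open>auto simp: polar_potential_def\<close>)

lemma quadratic_gap:
  fixes y :: real
  assumes "y * (1 - y) < 3/16"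
  shows "y < 1/4 \<or> 3/4 < y"
proof (rule ccontr)
  assume "\<not> (y < 1/4 \<or> 3/4 < y)"
  then have "0 \<le> (y - 1/4) * (3/4 - y)"
    by (intro mult_nonneg_nonneg) simp_all
  moreover have "(y - 1/4) * (3/4 - y) = y * (1 - y) - 3/16"
    by (simp add: field_simps)
  ultimately show False
    using assms by linarith
qed

lemma polar_orbit_tendsto_0:
  fixes x :: "nat \<Rightarrow> real"
  assumes nonneg: "\<And>s. 0 \<le> x s"
    and step: "\<And>s. N \<le> s \<Longrightarrow> x (Suc s) = (x s)^2 \<or> x (Suc s) = 2 * x s - (x s)^2"
    and small: "\<And>s. N \<le> s \<Longrightarrow> x s * (1 - x s) < 3/16"
    and start: "x N < 1/4"
    and lim: "(\<lambda>s. x s * (1 - x s)) \<longlonglongrightarrow> 0"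
  shows "x \<longlonglongrightarrow> 0"
proof -
  \<comment> \<open>both maps at most double a small value, so the orbit cannot jump across the gap \<open>[1/4, 3/4]\<close>\<close>
  have low: "x (N + k) < 1/4" for k
  proof (induction k)
    case (Suc k)
    have "(x (N + k))^2 \<le> x (N + k)"
      using Suc.IH nonneg[of "N + k"] by (simp add: power2_eq_square mult_left_le)
    then have "x (N + Suc k) \<le> 2 * x (N + k)"
      using step[of "N + k"] nonneg[of "N + k"] by auto
    then have "x (N + Suc k) < 1/2"
      using Suc.IH by linarith
    then show ?case
      using quadratic_gap[OF small[of "N + Suc k"]] by auto
  qed (use start in simp)
  have lower: "\<forall>\<^sub>F s in sequentially. 0 \<le> x s"
    using nonneg by simp
  have upper: "\<forall>\<^sub>F s in sequentially. x s \<le> 4/3 * (x s * (1 - x s))"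
    unfolding eventually_sequentially
  proof (intro exI allI impI)
    fix s assume "N \<le> s"
    then have "x s < 1/4" using low[of "s - N"] by simp
    then have "x s * 1 \<le> x s * (4/3 * (1 - x s))"
      using nonneg[of s] by (intro mult_left_mono) simp_all
    then show "x s \<le> 4/3 * (x s * (1 - x s))"
      by (simp add: ac_simps)
  qed
  have "(\<lambda>s. 4/3 * (x s * (1 - x s))) \<longlonglongrightarrow> 0"
    using tendsto_mult_right_zero[OF lim] by simp
  then show ?thesis
    by (rule tendsto_sandwich[OF lower upper tendsto_const])
qed

lemma polar_orbit_tendsto_0_or_1:
  fixes x :: "nat \<Rightarrow> real"
  assumes range: "\<And>s. 0 \<le> x s \<and> x s \<le> 1"
    and step: "\<And>s. N \<le> s \<Longrightarrow> x (Suc s) = (x s)^2 \<or> x (Suc s) = 2 * x s - (x s)^2"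
    and lim: "(\<lambda>s. x s * (1 - x s)) \<longlonglongrightarrow> 0"
  shows "x \<longlonglongrightarrow> 0 \<or> x \<longlonglongrightarrow> 1"
proof -
  obtain M where M: "\<And>s. M \<le> s \<Longrightarrow> x s * (1 - x s) < 3/16"
    using order_tendstoD(2)[OF lim, of "3/16"] by (auto simp: eventually_sequentially)
  define K where "K = max N M"
  have step_K: "x (Suc s) = (x s)^2 \<or> x (Suc s) = 2 * x s - (x s)^2" if "K \<le> s" for s
    using step that by (simp add: K_def)
  have small_K: "x s * (1 - x s) < 3/16" if "K \<le> s" for s
    using M that by (simp add: K_def)
  consider "x K < 1/4" | "3/4 < x K"
    using quadratic_gap[OF small_K] by blast
  then show ?thesis
  proof cases
    case 1
    then have "x \<longlonglongrightarrow> 0"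
      using range by (intro polar_orbit_tendsto_0[OF _ step_K small_K _ lim]) auto
    then show ?thesis ..
  next
    case 2
    \<comment> \<open>\<open>1 - x\<close> is again an orbit of the two maps, which exchange under \<open>x \<mapsto> 1 - x\<close>\<close>
    have "(\<lambda>s. 1 - x s) \<longlonglongrightarrow> 0"
    proof (rule polar_orbit_tendsto_0[of _ K])
      show "1 - x (Suc s) = (1 - x s)^2 \<or> 1 - x (Suc s) = 2 * (1 - x s) - (1 - x s)^2"
        if "K \<le> s" for s
        using step_K[OF that] by (auto simp: power2_eq_square algebra_simps)
    qed (use range small_K 2 lim in \<open>auto simp: algebra_simps\<close>)
    then have "x \<longlonglongrightarrow> 1"
      using tendsto_diff[OF tendsto_const[of 1], of "\<lambda>s. 1 - x s" 0] by simp
    then show ?thesis ..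
  qed
qed

lemma AE_eps_proc_tendsto_0_or_1:
  assumes "0 \<le> p" "p \<le> 1" "0 \<le> \<delta>" "\<delta> \<le> 1"
  shows "AE \<omega> in coin_space. (\<lambda>s. eps_proc p \<delta> nu \<omega> s) \<longlonglongrightarrow> 0 \<or> (\<lambda>s. eps_proc p \<delta> nu \<omega> s) \<longlonglongrightarrow> 1"
  using AE_summable_polar_potential_eps_proc[OF assms, where nu = nu]
proof eventually_elim
  case (elim \<omega>)
  define x where "x s = eps_proc p \<delta> nu \<omega> s" for s
  have range: "0 \<le> x s \<and> x s \<le> 1" for s
    unfolding x_def by (rule eps_proc_range[OF assms])
  have "(\<lambda>s. (polar_potential (x s))^2) \<longlonglongrightarrow> 0"
    using tendsto_power[OF summable_LIMSEQ_zero[OF elim], of 2] by (simp add: x_def)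
  moreover have "(polar_potential (x s))^2 = x s * (1 - x s)" for s
    using range[of s] by (simp add: polar_potential_def)
  ultimately have lim: "(\<lambda>s. x s * (1 - x s)) \<longlonglongrightarrow> 0" by simp
  have step: "x (Suc s) = (x s)^2 \<or> x (Suc s) = 2 * x s - (x s)^2" if "nu \<le> s" for s
    using that by (simp add: x_def eps_proc_Suc polar_step_0 Tplus_def Tminus_def)
  have "x \<longlonglongrightarrow> 0 \<or> x \<longlonglongrightarrow> 1"
    using range step lim by (rule polar_orbit_tendsto_0_or_1)
  then show ?case
    unfolding x_def .
qed

lemma integral_one_minus_eps_proc:
  assumes "0 \<le> p" "p \<le> 1" "0 \<le> \<delta>" "\<delta> \<le> 1"
  shows "(\<integral>\<omega>. 1 - eps_proc p \<delta> nu \<omega> s \<partial>coin_space) = (1 - \<delta>)^(min nu s) * (1 - p)"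
proof -
  have "(\<integral>\<omega>. 1 - eps_proc p \<delta> nu \<omega> s \<partial>coin_space)
      = enn2real (\<integral>\<^sup>+\<omega>. ennreal (1 - eps_proc p \<delta> nu \<omega> s) \<partial>coin_space)"
    by (rule integral_eq_nn_integral) (use eps_proc_range[OF assms] in auto)
  then show ?thesis
    using assms by (simp add: nn_integral_one_minus_eps_proc)
qed

lemma integral_one_minus_eps_proc_limit:
  assumes "0 \<le> p" "p \<le> 1" "0 \<le> \<delta>" "\<delta> \<le> 1"
    and [measurable]: "L \<in> borel_measurable coin_space"
    and lim: "AE \<omega> in coin_space. (\<lambda>s. eps_proc p \<delta> nu \<omega> s) \<longlonglongrightarrow> L \<omega>"
  shows "(\<integral>\<omega>. 1 - L \<omega> \<partial>coin_space) = (1 - \<delta>)^nu * (1 - p)"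
proof (rule LIMSEQ_unique)
  show "(\<lambda>s. \<integral>\<omega>. 1 - eps_proc p \<delta> nu \<omega> s \<partial>coin_space) \<longlonglongrightarrow> (\<integral>\<omega>. 1 - L \<omega> \<partial>coin_space)"
  proof (rule integral_dominated_convergence[where w = "\<lambda>_. 1"])
    show "AE \<omega> in coin_space. (\<lambda>s. 1 - eps_proc p \<delta> nu \<omega> s) \<longlonglongrightarrow> 1 - L \<omega>"
      using lim by eventually_elim (intro tendsto_intros)
    show "AE \<omega> in coin_space. norm (1 - eps_proc p \<delta> nu \<omega> s) \<le> 1" for s
      using eps_proc_range[OF assms(1-4)] by auto
  qed auto
  show "(\<lambda>s. \<integral>\<omega>. 1 - eps_proc p \<delta> nu \<omega> s \<partial>coin_space) \<longlonglongrightarrow> (1 - \<delta>)^nu * (1 - p)"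
    unfolding integral_one_minus_eps_proc[OF assms(1-4)]
    by (rule tendsto_eventually) (auto simp: eventually_sequentially intro: exI[of _ nu])
qed

lemma (in prob_space) measure_zero_set_eq_integral:
  assumes [measurable]: "L \<in> borel_measurable M" and "AE x in M. L x \<in> {0, 1}"
  shows "measure M {x \<in> space M. L x = 0} = (\<integral>x. 1 - L x \<partial>M)"
proof -
  have "(\<integral>x. 1 - L x \<partial>M) = (\<integral>x. indicator {x \<in> space M. L x = 0} x \<partial>M)"
    by (rule integral_cong_AE) (use assms in \<open>measurable, auto simp: indicator_def\<close>)
  then show ?thesis
    by simp
qed

theorem proposition6:
  fixes p \<delta> :: real and nu :: nat
  assumes "0 \<le> p" "p \<le> 1" "0 \<le> \<delta>" "\<delta> \<le> 1" "1 \<le> nu"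
  shows "\<exists>einf :: bool stream \<Rightarrow> real.
           einf \<in> borel_measurable coin_space \<and>
           (AE \<omega> in coin_space. (\<lambda>s. eps_proc p \<delta> nu \<omega> s) \<longlonglongrightarrow> einf \<omega>) \<and>
           (AE \<omega> in coin_space. einf \<omega> \<in> {0, 1}) \<and>
           measure coin_space {\<omega> \<in> space coin_space. einf \<omega> = 0} = 1 - p - DeltaR \<delta> p nu"
proof -
  define L where "L \<omega> = lim (\<lambda>s. eps_proc p \<delta> nu \<omega> s)" for \<omega>
  have L_measurable: "L \<in> borel_measurable coin_space"
    unfolding L_def by measurable
  have lim01: "AE \<omega> in coin_space. (\<lambda>s. eps_proc p \<delta> nu \<omega> s) \<longlonglongrightarrow> 0 \<or> (\<lambda>s. eps_proc p \<delta> nu \<omega> s) \<longlonglongrightarrow> 1"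
    using AE_eps_proc_tendsto_0_or_1 assms by blast
  have L_lim: "AE \<omega> in coin_space. (\<lambda>s. eps_proc p \<delta> nu \<omega> s) \<longlonglongrightarrow> L \<omega>"
    using lim01 by eventually_elim (auto simp: L_def limI)
  have L01: "AE \<omega> in coin_space. L \<omega> \<in> {0, 1}"
    using lim01 by eventually_elim (auto simp: L_def limI)
  have "measure coin_space {\<omega> \<in> space coin_space. L \<omega> = 0} = (\<integral>\<omega>. 1 - L \<omega> \<partial>coin_space)"
    by (rule coin.measure_zero_set_eq_integral[OF L_measurable L01])
  also have "\<dots> = 1 - p - DeltaR \<delta> p nu"
    using integral_one_minus_eps_proc_limit[OF assms(1-4) L_measurable L_lim]
    by (simp add: DeltaR_def algebra_simps)
  finally show ?thesis
    using L_measurable L_lim L01 by blast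
qed

end
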